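(* Let $\delta\in(0,1)$, let $\mathbf{k}$ be a reproducing kernel, and run $\mathrm{KH}(\delta)$ on an input sequence $\mathcal{X}_{\mathrm{in}}=(x_i)_{i=1}^{n_{\mathrm{in}}}$ with $n_{\mathrm{in}}\ge2$ even. Then there is an event $\mathcal{E}$ with probability at least $1-\delta/2$ such that, for all $i\in[n_{\mathrm{in}}/2]$, $\frac{1}{2i}\psi_i$ is $(\mathbf{k},\nu_i)$-sub-Gaussian on $\mathcal{E}$ with $$\nu_i=b_{\max,i}\frac{\sqrt{\log(2n_{\mathrm{in}}/\delta)}}{2i}=\frac{\sqrt{\log(2n_{\mathrm{in}}/\delta)}}{2i}\max_{j\in[i]}\mathrm{MMD}_{\mathbf{k}}(\delta_{x_{2j-1}},\delta_{x_{2j}})\le\frac{\sqrt{\log(2n_{\mathrm{in}}/\delta)}}{2i}\cdot2\min\Big(\max_{x\in\mathcal{X}_{\mathrm{in}}}\sqrt{\mathbf{k}(x,x)},\ \max_{x\in\mathcal{X}_{\mathrm{in}}}\mathrm{MMD}_{\mathbf{k}}(\delta_x,\mathbb{P}_{\mathrm{in}})\Big).$$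
   Context: Kernel Halving $\mathrm{KH}(\delta)$: input $(x_1,\dots,x_{n_{\mathrm{in}}})$ with $n_{\mathrm{in}}$ even and kernel $\mathbf{k}$ with RKHS $\mathcal{H}_{\mathbf{k}}$. Set ordered lists $S_1=S_2=\emptyset$, $\psi_0=0\in\mathcal{H}_{\mathbf{k}}$, $b_{\max,0}=0$. For $i=1,\dots,n_{\mathrm{in}}/2$: let $(x,x')=(x_{2i-1},x_{2i})$, $f_i=\mathbf{k}(x_{2i-1},\cdot)-\mathbf{k}(x_{2i},\cdot)$, $b_i=\|f_i\|_{\mathbf{k}}=\sqrt{\mathbf{k}(x,x)+\mathbf{k}(x',x')-2\mathbf{k}(x,x')}$, $b_{\max,i}=\max(b_i,b_{\max,i-1})$, $a_i=b_ib_{\max,i}(\tfrac12+\log(2n_{\mathrm{in}}/\delta))$, $\alpha_i=\langle\psi_{i-1},f_i\rangle_{\mathbf{k}}=\sum_{j=1}^{2i-2}(\mathbf{k}(x_j,x)-\mathbf{k}(x_j,x'))-2\sum_{z\in S_1}(\mathbf{k}(z,x)-\mathbf{k}(z,x'))$. With probability $\min(1,\tfrac12(1-\alpha_i/a_i)_+)$ (fresh randomness) set $\eta_i=1$ and swap $x$ and $x'$; otherwise $\eta_i=-1$. Append $x$ to $S_1$, $x'$ to $S_2$, set $\psi_i=\psi_{i-1}+\eta_if_i$ (so $\psi_i=\sum_{y\in S_2}\mathbf{k}(y,\cdot)-\sum_{y\in S_1}\mathbf{k}(y,\cdot)$). Output $\mathcal{X}_{\mathrm{out}}=S_1$. Here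 $(a)_+=\max(a,0)$. $\mathbb{P}_{\mathrm{in}}$ is the empirical distribution of $\mathcal{X}_{\mathrm{in}}$, $\delta_x$ the point mass at $x$, and $\mathrm{MMD}_{\mathbf{k}}(\mu,\tilde\mu)=\sup_{\|f\|_{\mathbf{k}}\le1}|\mathbb{E}_\mu f-\mathbb{E}_{\tilde\mu}f|$. A random $\phi\in\mathcal{H}_{\mathbf{k}}$ is $(\mathbf{k},\nu)$-sub-Gaussian on $\mathcal{E}$ if $\mathbb{E}[\exp(\langle f,\phi\rangle_{\mathbf{k}})\mathbf{1}_{\mathcal{E}}]\le\exp(\frac{\nu^2}{2}\|f\|_{\mathbf{k}}^2)$ for all $f\in\mathcal{H}_{\mathbf{k}}$. *)

theory Defs
  imports "HOL-Probability.Probability"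
begin

text \<open>The RKHS of the kernel
  is (isometrically) the closed linear span of the feature vectors; an element f of it
  is evaluated at x as inner f (Phi x).\<close>

definition fm_kernel :: "('x \<Rightarrow> 'h::real_inner) \<Rightarrow> 'x \<Rightarrow> 'x \<Rightarrow> real" where
  "fm_kernel Phi x y = inner (Phi x) (Phi y)"

definition rkhs :: "('x \<Rightarrow> 'h::real_inner) \<Rightarrow> 'h set" where
  "rkhs Phi = closure (span (range Phi))"

definition mmd :: "('x \<Rightarrow> 'h::real_inner) \<Rightarrow> 'x pmf \<Rightarrow> 'x pmf \<Rightarrow> real" where
  "mmd Phi p q = (SUP f \<in> {f \<in> rkhs Phi. norm f \<le> 1}.
      \<bar>measure_pmf.expectation p (\<lambda>x. inner f (Phi x))
       - measure_pmf.expectation q (\<lambda>x. inner f (Phi x))\<bar>)"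

definition sub_gaussian_on ::
  "('x \<Rightarrow> 'h::real_inner) \<Rightarrow> 'w pmf \<Rightarrow> 'w set \<Rightarrow> ('w \<Rightarrow> 'h) \<Rightarrow> real \<Rightarrow> bool" where
  "sub_gaussian_on Phi M E phi nu =
     (\<forall>f \<in> rkhs Phi. measure_pmf.expectation M (\<lambda>w. exp (inner f (phi w)) * indicator E w)
        \<le> exp (nu\<^sup>2 / 2 * (norm f)\<^sup>2))"

text \<open>State of Kernel Halving: (S1, S2, psi, bmax).\<close>
type_synonym ('x, 'h) kh_state = "'x list \<times> 'x list \<times> 'h \<times> real"

definition kh_psi :: "('x, 'h) kh_state \<Rightarrow> 'h" where
  "kh_psi st = fst (snd (snd st))"

definition kh_S1 :: "('x, 'h) kh_state \<Rightarrow> 'x list" where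
  "kh_S1 st = fst st"

definition kh_step :: "real \<Rightarrow> nat \<Rightarrow> ('x \<Rightarrow> 'h::real_inner) \<Rightarrow> 'x \<times> 'x
    \<Rightarrow> ('x, 'h) kh_state \<Rightarrow> ('x, 'h) kh_state pmf" where
  "kh_step delta n Phi xx st =
    (case xx of (x, x') \<Rightarrow> case st of (S1, S2, psi, bm) \<Rightarrow>
      let k = fm_kernel Phi;
          f = Phi x - Phi x';
          b = sqrt (k x x + k x' x' - 2 * k x x');
          bm' = max b bm;
          a = b * bm' * (1/2 + ln (2 * real n / delta));
          alpha = inner psi f;
          p = min 1 ((1/2) * max 0 (1 - alpha / a))
      in map_pmf (\<lambda>eta. if eta then (S1 @ [x'], S2 @ [x], psi + f, bm')
                                else (S1 @ [x], S2 @ [x'], psi - f, bm'))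
                 (bernoulli_pmf p))"

primrec kh_iter :: "real \<Rightarrow> nat \<Rightarrow> ('x \<Rightarrow> 'h::real_inner) \<Rightarrow> ('x \<times> 'x) list
    \<Rightarrow> ('x, 'h) kh_state \<Rightarrow> ('x, 'h) kh_state list pmf" where
  "kh_iter delta n Phi [] st = return_pmf [st]"
| "kh_iter delta n Phi (pr # prs) st =
     bind_pmf (kh_step delta n Phi pr st)
       (\<lambda>st'. map_pmf (\<lambda>tr. st # tr) (kh_iter delta n Phi prs st'))"

definition kh_pairs :: "'x list \<Rightarrow> ('x \<times> 'x) list" where
  "kh_pairs xs = map (\<lambda>i. (xs ! (2 * i), xs ! (2 * i + 1))) [0..<length xs div 2]"

text \<open>KH(delta) on input xs: distribution of the trajectory; entry i is the state
  after round i (so kh_psi (tr ! i) is psi_i).\<close>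
definition KH :: "real \<Rightarrow> ('x \<Rightarrow> 'h::real_inner) \<Rightarrow> 'x list \<Rightarrow> ('x, 'h) kh_state list pmf" where
  "KH delta Phi xs = kh_iter delta (length xs) Phi (kh_pairs xs) ([], [], 0, 0)"

text \<open>b_j for j \<ge> 1 (1-indexed, pair (x_{2j-1}, x_{2j})) and b_{max,i}.\<close>
definition kh_b :: "('x \<Rightarrow> 'h::real_inner) \<Rightarrow> 'x list \<Rightarrow> nat \<Rightarrow> real" where
  "kh_b Phi xs j = (let x = xs ! (2 * j - 2); x' = xs ! (2 * j - 1); k = fm_kernel Phi
                    in sqrt (k x x + k x' x' - 2 * k x x'))"

fun kh_bmax :: "('x \<Rightarrow> 'h::real_inner) \<Rightarrow> 'x list \<Rightarrow> nat \<Rightarrow> real" where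
  "kh_bmax Phi xs 0 = 0"
| "kh_bmax Phi xs (Suc i) = max (kh_b Phi xs (Suc i)) (kh_bmax Phi xs i)"

end

(*
  The psi-component of the kernel-halving trajectory is a self-balancing walk in the feature
  space: psi_i = psi_(i-1) +- f_i, the sign + being chosen with probability
  (1 - <psi_(i-1), f_i> / a_i) / 2 whenever this lies in [0, 1].  On the event that it never has
  to be clipped, Hoeffding's lemma for the two-point step shows that E[exp <u, psi_i>] is at most
  exp (<u, f_i>^2 / 2) times E[exp <u - (<u, f_i> / a_i) f_i, psi_(i-1)>].  With the thresholds
  a_i = b_i b_max,i (1/2 + L), L = log (2 n / delta), this propagates the variance proxy
  b_max,i^2 (1/2 + L)^2 / (2 L) <= b_max,i^2 L.  A Chernoff bound with this proxy shows that
  step i needs clipping with probability at most 2 exp (- L) = delta / n, and a union bound over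
  the n/2 steps gives the event its probability 1 - delta/2.  The MMD identities hold because
  each difference of mean embeddings lies in the span of the feature vectors.
*)

theory Submission
  imports Defs
begin

lemma expectation_bind_pmf_finite:
  fixes f :: "'b \<Rightarrow> real"
  assumes "finite (set_pmf M)" and "\<And>x. x \<in> set_pmf M \<Longrightarrow> finite (set_pmf (N x))"
  shows "measure_pmf.expectation (bind_pmf M N) f =
    measure_pmf.expectation M (\<lambda>x. measure_pmf.expectation (N x) f)"
  by (simp add: pmf_expectation_bind[OF assms(1) assms(2) order_refl]
      integral_measure_pmf[OF assms(1)])

lemma expectation_mono_pmf_finite:
  fixes f g :: "'a \<Rightarrow> real"
  assumes "finite (set_pmf M)" and "\<And>x. x \<in> set_pmf M \<Longrightarrow> f x \<le> g x"
  shows "measure_pmf.expectation M f \<le> measure_pmf.expectation M g"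
  using assms
  by (intro integral_mono_AE) (auto simp: AE_measure_pmf_iff integrable_measure_pmf_finite)

lemma two_point_mgf_le:
  fixes p t :: real
  assumes "0 \<le> p" "p \<le> 1"
  shows "p * exp t + (1 - p) * exp (- t) \<le> exp (t\<^sup>2 / 2 + (2 * p - 1) * t)"
proof -
  have nonneg_case: "q * exp s + (1 - q) * exp (- s) \<le> exp (s\<^sup>2 / 2 + (2 * q - 1) * s)"
    if "0 \<le> q" "q \<le> 1" "0 \<le> s" for q s :: real
  proof -
    have pos: "0 < 1 + q * (exp (2 * s) - 1)"
      using that by (intro add_pos_nonneg mult_nonneg_nonneg) auto
    have "ln (1 + q * (exp (2 * s) - 1)) \<le> s\<^sup>2 / 2 + 2 * s * q"
      using Hoeffdings_lemma_aux[of "2 * s" q] that by (simp add: power2_eq_square)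
    then have "1 + q * (exp (2 * s) - 1) \<le> exp (s\<^sup>2 / 2 + 2 * s * q)"
      using pos by (metis exp_le_cancel_iff exp_ln)
    then have "exp (- s) * (1 + q * (exp (2 * s) - 1)) \<le> exp (- s) * exp (s\<^sup>2 / 2 + 2 * s * q)"
      by simp
    moreover have "exp (- s) * exp (2 * s) = exp s"
      by (simp flip: exp_add)
    ultimately show ?thesis
      by (simp add: algebra_simps flip: exp_add)
  qed
  show ?thesis
  proof (cases "0 \<le> t")
    case True
    then show ?thesis using nonneg_case assms by simp
  next
    case False
    then show ?thesis
      using nonneg_case[of "1 - p" "- t"] assms by (simp add: algebra_simps)
  qed
qed

section \<open>Sub-Gaussian random vectors\<close>

definition hilbert_sub_gaussian_on ::
    "'w pmf \<Rightarrow> 'w set \<Rightarrow> ('w \<Rightarrow> 'h::real_inner) \<Rightarrow> real \<Rightarrow> bool" where "hilbert_sub_gaussian_on M E X \<sigma> \<longleftrightarrow>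
    (\<forall>u. measure_pmf.expectation M (\<lambda>w. exp (inner u (X w)) * indicator E w)
           \<le> exp (\<sigma>\<^sup>2 / 2 * (norm u)\<^sup>2))"

lemma sub_gaussian_on_if_hilbert_sub_gaussian_on:
  "hilbert_sub_gaussian_on M E X \<sigma> \<Longrightarrow> sub_gaussian_on Phi M E X \<sigma>"
  by (simp add: hilbert_sub_gaussian_on_def sub_gaussian_on_def)

lemma hilbert_sub_gaussian_on_scaleR:
  fixes X :: "'w \<Rightarrow> 'h::real_inner"
  assumes "hilbert_sub_gaussian_on M E X \<sigma>"
  shows "hilbert_sub_gaussian_on M E (\<lambda>w. r *\<^sub>R X w) (r * \<sigma>)"
  unfolding hilbert_sub_gaussian_on_def
proof (intro allI)
  fix u :: 'h
  have "measure_pmf.expectation M (\<lambda>w. exp (inner (r *\<^sub>R u) (X w)) * indicator E w)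
      \<le> exp (\<sigma>\<^sup>2 / 2 * (norm (r *\<^sub>R u))\<^sup>2)"
    using assms unfolding hilbert_sub_gaussian_on_def by blast
  then show "measure_pmf.expectation M (\<lambda>w. exp (inner u (r *\<^sub>R X w)) * indicator E w)
      \<le> exp ((r * \<sigma>)\<^sup>2 / 2 * (norm u)\<^sup>2)"
    by (simp add: power_mult_distrib mult_ac)
qed

lemma hilbert_sub_gaussian_on_mono:
  fixes X :: "'w \<Rightarrow> 'h::real_inner"
  assumes "hilbert_sub_gaussian_on M E X \<sigma>" and "\<bar>\<sigma>\<bar> \<le> \<sigma>'"
  shows "hilbert_sub_gaussian_on M E X \<sigma>'"
  unfolding hilbert_sub_gaussian_on_def
proof (intro allI)
  fix u :: 'h
  have "\<sigma>\<^sup>2 \<le> \<sigma>'\<^sup>2"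
    using assms(2) by (metis abs_ge_zero power2_abs power_mono)
  then have "\<sigma>\<^sup>2 / 2 * (norm u)\<^sup>2 \<le> \<sigma>'\<^sup>2 / 2 * (norm u)\<^sup>2"
    by (intro mult_right_mono) auto
  then show "measure_pmf.expectation M (\<lambda>w. exp (inner u (X w)) * indicator E w)
      \<le> exp (\<sigma>'\<^sup>2 / 2 * (norm u)\<^sup>2)"
    using assms(1) unfolding hilbert_sub_gaussian_on_def by (meson exp_le_cancel_iff order_trans)
qed

lemma hilbert_sub_gaussian_on_pullback:
  assumes sg: "hilbert_sub_gaussian_on (map_pmf g M) E X \<sigma>" and fin: "finite (set_pmf M)"
    and pull: "\<And>w. w \<in> set_pmf M \<Longrightarrow> w \<in> E' \<Longrightarrow> g w \<in> E \<and> Y w = X (g w)"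
  shows "hilbert_sub_gaussian_on M E' Y \<sigma>"
  unfolding hilbert_sub_gaussian_on_def
proof (intro allI)
  fix u
  have "measure_pmf.expectation M (\<lambda>w. exp (inner u (Y w)) * indicator E' w)
      \<le> measure_pmf.expectation M (\<lambda>w. exp (inner u (X (g w))) * indicator E (g w))"
    using pull by (intro expectation_mono_pmf_finite[OF fin]) (auto simp: indicator_def)
  also have "\<dots> \<le> exp (\<sigma>\<^sup>2 / 2 * (norm u)\<^sup>2)"
    using sg unfolding hilbert_sub_gaussian_on_def by simp
  finally show "measure_pmf.expectation M (\<lambda>w. exp (inner u (Y w)) * indicator E' w)
      \<le> exp (\<sigma>\<^sup>2 / 2 * (norm u)\<^sup>2)" .
qed

lemma hilbert_sub_gaussian_on_subset:
  assumes "hilbert_sub_gaussian_on M E X \<sigma>" and "finite (set_pmf M)" and "E' \<subseteq> E"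
  shows "hilbert_sub_gaussian_on M E' X \<sigma>"
  using hilbert_sub_gaussian_on_pullback[of "\<lambda>w. w" M E X \<sigma> E' X] assms by auto

lemma prob_inner_gt_le:
  assumes sg: "hilbert_sub_gaussian_on M E X \<sigma>" and fin: "finite (set_pmf M)"
    and "\<sigma> \<noteq> 0" "v \<noteq> 0" "0 \<le> a"
  shows "measure_pmf.prob M {w \<in> E. a < inner (X w) v} \<le> exp (- a\<^sup>2 / (2 * \<sigma>\<^sup>2 * (norm v)\<^sup>2))"
proof -
  define lam where "lam = a / (\<sigma>\<^sup>2 * (norm v)\<^sup>2)"
  have lam: "0 \<le> lam"
    using assms by (simp add: lam_def)
  have "measure_pmf.prob M {w \<in> E. a < inner (X w) v}
      = measure_pmf.expectation M (indicator {w \<in> E. a < inner (X w) v})"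
    by simp
  also have "\<dots> \<le> measure_pmf.expectation M
      (\<lambda>w. exp (inner (lam *\<^sub>R v) (X w)) * indicator E w * exp (- lam * a))"
  proof (rule expectation_mono_pmf_finite[OF fin])
    fix w
    have "w \<in> E \<Longrightarrow> a < inner (X w) v \<Longrightarrow> 1 \<le> exp (lam * inner (X w) v - lam * a)"
      using lam by (simp add: mult_left_mono)
    then show "indicator {w \<in> E. a < inner (X w) v} w
        \<le> exp (inner (lam *\<^sub>R v) (X w)) * indicator E w * exp (- lam * a)"
      by (auto simp: indicator_def inner_commute mult_exp_exp)
  qed
  also have "\<dots> = measure_pmf.expectation M
      (\<lambda>w. exp (inner (lam *\<^sub>R v) (X w)) * indicator E w) * exp (- lam * a)"
    by simp
  also have "\<dots> \<le> exp (\<sigma>\<^sup>2 / 2 * (norm (lam *\<^sub>R v))\<^sup>2) * exp (- lam * a)"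
    using sg unfolding hilbert_sub_gaussian_on_def by (intro mult_right_mono) (blast, simp)
  also have "\<dots> = exp (- a\<^sup>2 / (2 * \<sigma>\<^sup>2 * (norm v)\<^sup>2))"
    using assms by (simp add: lam_def mult_exp_exp power2_eq_square field_simps)
  finally show ?thesis .
qed

section \<open>The self-balancing walk\<close>

definition balancing_step :: "'h::real_inner \<times> real \<Rightarrow> 'h \<Rightarrow> 'h pmf" where
  "balancing_step w psi = map_pmf (\<lambda>eta. if eta then psi + fst w else psi - fst w)
     (bernoulli_pmf (min 1 ((1/2) * max 0 (1 - inner psi (fst w) / snd w))))"

primrec balancing_walk :: "('h::real_inner \<times> real) list \<Rightarrow> 'h \<Rightarrow> 'h list pmf" where
  "balancing_walk [] psi = return_pmf [psi]"
| "balancing_walk (w # ws) psi =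
     bind_pmf (balancing_step w psi) (\<lambda>psi'. map_pmf ((#) psi) (balancing_walk ws psi'))"

lemma finite_set_pmf_balancing_step: "finite (set_pmf (balancing_step w psi))"
  by (simp add: balancing_step_def UNIV_bool)

lemma finite_set_pmf_balancing_walk: "finite (set_pmf (balancing_walk ws psi))"
  by (induction ws arbitrary: psi) (auto simp: finite_set_pmf_balancing_step)

lemma length_balancing_walk:
  "ps \<in> set_pmf (balancing_walk ws psi) \<Longrightarrow> length ps = Suc (length ws)"
  by (induction ws arbitrary: psi ps) auto

lemma balancing_walk_snoc:
  "balancing_walk (ws @ [w]) psi =
     bind_pmf (balancing_walk ws psi) (\<lambda>ps. map_pmf (\<lambda>p. ps @ [p]) (balancing_step w (last ps)))"
proof (induction ws arbitrary: psi)
  case Nil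
  then show ?case by (simp add: bind_return_pmf map_pmf_def)
next
  case (Cons v ws)
  have "map_pmf ((#) psi) (map_pmf (\<lambda>p. ps @ [p]) (balancing_step w (last ps))) =
      map_pmf (\<lambda>p. (psi # ps) @ [p]) (balancing_step w (last (psi # ps)))"
    if "ps \<in> set_pmf (balancing_walk ws psi')" for ps psi'
    using length_balancing_walk[OF that] by (auto simp: map_pmf_comp)
  then have "map_pmf ((#) psi) (balancing_walk (ws @ [w]) psi') = bind_pmf (balancing_walk ws psi')
      (\<lambda>ps. map_pmf (\<lambda>p. (psi # ps) @ [p]) (balancing_step w (last (psi # ps))))" for psi'
    unfolding Cons.IH map_bind_pmf by (intro bind_pmf_cong) auto
  then show ?case
    by (simp add: bind_assoc_pmf bind_map_pmf)
qed

lemma balancing_walk_take: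
  "map_pmf (take (Suc i)) (balancing_walk ws psi) = balancing_walk (take i ws) psi"
proof (induction ws arbitrary: i psi)
  case Nil
  then show ?case by simp
next
  case (Cons w ws)
  show ?case
  proof (cases i)
    case 0
    then show ?thesis by (simp add: map_bind_pmf map_pmf_comp)
  next
    case (Suc j)
    have "map_pmf (take (Suc i)) (balancing_walk (w # ws) psi) = bind_pmf (balancing_step w psi)
        (\<lambda>psi'. map_pmf ((#) psi) (map_pmf (take (Suc j)) (balancing_walk ws psi')))"
      by (simp add: Suc map_bind_pmf map_pmf_comp)
    then show ?thesis by (simp add: Cons.IH Suc)
  qed
qed

(* The event that the probability in balancing_step was never clipped to [0, 1]. *)
definition unclipped :: "('h::real_inner \<times> real) list \<Rightarrow> 'h list set" where
  "unclipped ws = {ps. \<forall>j<length ws. \<bar>inner (ps ! j) (fst (ws ! j))\<bar> \<le> snd (ws ! j)}"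

lemma unclipped_take_Suc:
  "i < length ws \<Longrightarrow> unclipped (take (Suc i) ws) =
     unclipped (take i ws) \<inter> {ps. \<bar>inner (ps ! i) (fst (ws ! i))\<bar> \<le> snd (ws ! i)}"
  by (auto simp: unclipped_def less_Suc_eq)

lemma unclipped_take_mono: "i \<le> j \<Longrightarrow> unclipped (take j ws) \<subseteq> unclipped (take i ws)"
  by (auto simp: unclipped_def)

lemma snoc_in_unclipped_take_Suc_iff:
  assumes "length ps = Suc i" "i < length ws"
  shows "ps @ [p] \<in> unclipped (take (Suc i) ws) \<longleftrightarrow>
    ps \<in> unclipped (take i ws) \<and> \<bar>inner (last ps) (fst (ws ! i))\<bar> \<le> snd (ws ! i)"
proof -
  have "last ps = ps ! i"
    using assms(1) by (subst last_conv_nth) auto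
  then show ?thesis
    using assms by (auto simp: unclipped_def less_Suc_eq nth_append)
qed

lemma balancing_step_mgf_le:
  fixes u psi f :: "'h::real_inner"
  assumes unclipped: "\<bar>inner psi f\<bar> \<le> a" and a: "0 < a \<or> f = 0"
  shows "measure_pmf.expectation (balancing_step (f, a) psi) (\<lambda>p. exp (inner u p)) \<le>
    exp (inner (u - (inner u f / a) *\<^sub>R f) psi) * exp ((inner u f)\<^sup>2 / 2)"
proof (cases "f = 0")
  case True
  then show ?thesis by (simp add: balancing_step_def)
next
  case False
  with a have "0 < a" by auto
  define t where "t = inner u f"
  define p where "p = (1 - inner psi f / a) / 2"
  have "- 1 \<le> inner psi f / a" "inner psi f / a \<le> 1"
    using unclipped \<open>0 < a\<close> by (auto simp: field_simps abs_le_iff)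
  then have p: "0 \<le> p" "p \<le> 1" "min 1 ((1/2) * max 0 (1 - inner psi f / a)) = p"
    by (auto simp: p_def)
  have "measure_pmf.expectation (balancing_step (f, a) psi) (\<lambda>p. exp (inner u p))
      = p * exp (inner u psi + t) + (1 - p) * exp (inner u psi - t)"
    using p by (simp add: balancing_step_def t_def inner_diff_right inner_add_right)
  also have "\<dots> = exp (inner u psi) * (p * exp t + (1 - p) * exp (- t))"
    by (simp add: algebra_simps flip: exp_add)
  also have "\<dots> \<le> exp (inner u psi) * exp (t\<^sup>2 / 2 + (2 * p - 1) * t)"
    using p by (intro mult_left_mono two_point_mgf_le) auto
  also have "\<dots> = exp (inner (u - (inner u f / a) *\<^sub>R f) psi) * exp ((inner u f)\<^sup>2 / 2)"
  proof -
    have "inner u psi + (2 * p - 1) * t = inner (u - (inner u f / a) *\<^sub>R f) psi"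
      using \<open>0 < a\<close>
      by (simp add: p_def t_def inner_diff_left inner_commute diff_divide_distrib algebra_simps)
    then show ?thesis
      by (simp add: t_def mult_exp_exp algebra_simps)
  qed
  finally show ?thesis .
qed

lemma variance_step_le:
  fixes s C U t a b :: real
  assumes s: "0 \<le> s" "s \<le> C" and U: "0 \<le> U" and t: "t\<^sup>2 \<le> b\<^sup>2 * U"
    and a: "a \<noteq> 0" "a\<^sup>2 \<le> C * (2 * a - b\<^sup>2)"
  shows "s * (U - 2 * t\<^sup>2 / a + t\<^sup>2 * b\<^sup>2 / a\<^sup>2) + t\<^sup>2 \<le> C * U"
proof -
  define q where "q = s * (2 * a - b\<^sup>2) / a\<^sup>2"
  define r where "r = b\<^sup>2 * (2 * a - b\<^sup>2) / a\<^sup>2"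
  have a2: "0 < a\<^sup>2"
    using a by simp
  have lhs: "s * (U - 2 * t\<^sup>2 / a + t\<^sup>2 * b\<^sup>2 / a\<^sup>2) + t\<^sup>2 = s * U + t\<^sup>2 * (1 - q)"
    using a by (simp add: q_def field_simps power2_eq_square)
  show ?thesis
  proof (cases "q \<le> 1")
    case False
    then have "t\<^sup>2 * (1 - q) \<le> 0"
      by (simp add: mult_nonneg_nonpos)
    moreover have "s * U \<le> C * U"
      using s U by (intro mult_right_mono) auto
    ultimately show ?thesis
      using lhs by linarith
  next
    case True
    have "r \<le> 1"
      using a2 sum_power2_ge_zero[of "a - b\<^sup>2" 0]
      by (simp add: r_def divide_le_eq_1 power2_eq_square algebra_simps)
    have "b\<^sup>2 * a\<^sup>2 \<le> b\<^sup>2 * (C * (2 * a - b\<^sup>2))"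
      using a by (intro mult_left_mono) auto
    then have "b\<^sup>2 \<le> C * r"
      using a2 by (simp add: r_def field_simps)
    have "s * U + t\<^sup>2 * (1 - q) \<le> s * U + b\<^sup>2 * U * (1 - q)"
      using t True by (intro add_left_mono mult_right_mono) auto
    also have "\<dots> = U * (s * (1 - r) + b\<^sup>2)"
      using a2 by (simp add: q_def r_def field_simps)
    also have "\<dots> \<le> U * (C * (1 - r) + b\<^sup>2)"
      using U s \<open>r \<le> 1\<close> by (intro mult_left_mono add_right_mono mult_right_mono) auto
    also have "\<dots> \<le> U * C"
      using U \<open>b\<^sup>2 \<le> C * r\<close> by (intro mult_left_mono) (auto simp: algebra_simps)
    finally show ?thesis
      using lhs by (simp add: mult.commute)
  qed
qed

definition variance_factor :: "real \<Rightarrow> real" where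
  "variance_factor L = (1/2 + L)\<^sup>2 / (2 * L)"

lemma variance_factor_le: "4/3 \<le> L \<Longrightarrow> variance_factor L \<le> L"
proof -
  assume L: "4/3 \<le> L"
  have "4/3 * (1/3) \<le> L * (L - 1)"
    using L by (intro mult_mono) auto
  then have "(1/2 + L)\<^sup>2 \<le> L * (2 * L)"
    by (simp add: power2_eq_square algebra_simps)
  then show ?thesis
    using L by (simp add: variance_factor_def divide_le_eq)
qed

(* The weights ws are indexed from 0 while c is indexed by the number of steps taken, so that
   c (Suc j) bounds the j-th weight and c becomes b_max for kernel halving. *)
locale balancing_schedule =
  fixes ws :: "('h::real_inner \<times> real) list" and c :: "nat \<Rightarrow> real" and L :: real
  assumes L_pos: "0 < L"
    and c_0_nonneg: "0 \<le> c 0"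
    and c_mono: "mono c"
    and norm_le_c: "j < length ws \<Longrightarrow> norm (fst (ws ! j)) \<le> c (Suc j)"
    and threshold_eq: "j < length ws \<Longrightarrow> snd (ws ! j) = norm (fst (ws ! j)) * c (Suc j) * (1/2 + L)"
begin

lemma c_nonneg: "0 \<le> c i"
  using c_0_nonneg c_mono by (meson le0 monoD order_trans)

lemma threshold_pos_or_zero:
  assumes "j < length ws"
  shows "0 < snd (ws ! j) \<or> fst (ws ! j) = 0"
proof (cases "fst (ws ! j) = 0")
  case False
  then have "0 < norm (fst (ws ! j))"
    by simp
  moreover from this have "0 < c (Suc j)"
    using norm_le_c[OF assms] by linarith
  ultimately show ?thesis
    using threshold_eq[OF assms] L_pos by simp
qed simp

lemma threshold_sq_le:
  assumes "j < length ws"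
  defines "a \<equiv> snd (ws ! j)" and "b \<equiv> norm (fst (ws ! j))"
  shows "a\<^sup>2 \<le> (c (Suc j))\<^sup>2 * variance_factor L * (2 * a - b\<^sup>2)"
proof -
  define D where "D = 1/2 + L"
  have a: "a = b * c (Suc j) * D"
    using threshold_eq[OF assms(1)] by (simp add: a_def b_def D_def)
  have "b * (b * (2 * L + 1)) \<le> b * (c (Suc j) * (2 * L + 1))"
    using norm_le_c[OF assms(1)] L_pos by (intro mult_left_mono mult_right_mono) (auto simp: b_def)
  then have "2 * L * b\<^sup>2 \<le> 2 * b * c (Suc j) * D - b\<^sup>2"
    by (simp add: D_def power2_eq_square algebra_simps)
  then have "(c (Suc j) * D)\<^sup>2 * (2 * L * b\<^sup>2) \<le> (c (Suc j) * D)\<^sup>2 * (2 * b * c (Suc j) * D - b\<^sup>2)"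
    by (intro mult_left_mono) auto
  then have "(c (Suc j) * D)\<^sup>2 * (2 * L * b\<^sup>2) / (2 * L)
      \<le> (c (Suc j) * D)\<^sup>2 * (2 * b * c (Suc j) * D - b\<^sup>2) / (2 * L)"
    using L_pos by (intro divide_right_mono) auto
  then show ?thesis
    using L_pos by (simp add: a variance_factor_def D_def[symmetric] power_mult_distrib mult_ac)
qed

lemma variance_recursion:
  assumes "i < length ws"
  defines "f \<equiv> fst (ws ! i)" and "a \<equiv> snd (ws ! i)"
  shows "(c i)\<^sup>2 * variance_factor L * (norm (u - (inner u f / a) *\<^sub>R f))\<^sup>2 + (inner u f)\<^sup>2
    \<le> (c (Suc i))\<^sup>2 * variance_factor L * (norm u)\<^sup>2"
proof -
  have K: "0 \<le> variance_factor L"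
    using L_pos by (simp add: variance_factor_def)
  have s: "(c i)\<^sup>2 * variance_factor L \<le> (c (Suc i))\<^sup>2 * variance_factor L"
    using K c_nonneg c_mono by (intro mult_right_mono power_mono) (auto simp: monoD)
  show ?thesis
  proof (cases "f = 0")
    case True
    then show ?thesis
      using s by (simp add: mult_right_mono)
  next
    case False
    then have "0 < a"
      using threshold_pos_or_zero[OF assms(1)] by (auto simp: f_def a_def)
    have "(norm (u - (inner u f / a) *\<^sub>R f))\<^sup>2
        = (norm u)\<^sup>2 - 2 * (inner u f)\<^sup>2 / a + (inner u f)\<^sup>2 * (norm f)\<^sup>2 / a\<^sup>2"
      unfolding power2_norm_eq_inner
      by (simp add: inner_diff_left inner_diff_right inner_commute power2_eq_square)
    moreover have "(inner u f)\<^sup>2 \<le> (norm f)\<^sup>2 * (norm u)\<^sup>2"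
      using Cauchy_Schwarz_ineq[of u f] by (simp add: power2_norm_eq_inner mult.commute)
    ultimately show ?thesis
      using threshold_sq_le[OF assms(1)] \<open>0 < a\<close> K s
      by (simp add: variance_step_le f_def a_def c_nonneg)
  qed
qed

lemma expectation_step_le:
  assumes i: "i < length ws" and len: "length ps = Suc i"
  defines "f \<equiv> fst (ws ! i)" and "a \<equiv> snd (ws ! i)"
  shows "measure_pmf.expectation (balancing_step (ws ! i) (last ps))
      (\<lambda>p. exp (inner u p) * indicator (unclipped (take (Suc i) ws)) (ps @ [p]))
    \<le> exp (inner (u - (inner u f / a) *\<^sub>R f) (last ps)) * indicator (unclipped (take i ws)) ps
      * exp ((inner u f)\<^sup>2 / 2)"
proof (cases "ps \<in> unclipped (take i ws) \<and> \<bar>inner (last ps) f\<bar> \<le> a")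
  case True
  then have "measure_pmf.expectation (balancing_step (ws ! i) (last ps))
      (\<lambda>p. exp (inner u p) * indicator (unclipped (take (Suc i) ws)) (ps @ [p]))
    = measure_pmf.expectation (balancing_step (f, a) (last ps)) (\<lambda>p. exp (inner u p))"
    using snoc_in_unclipped_take_Suc_iff[OF len i] by (simp add: f_def a_def)
  also have "\<dots> \<le> exp (inner (u - (inner u f / a) *\<^sub>R f) (last ps)) * exp ((inner u f)\<^sup>2 / 2)"
    using True threshold_pos_or_zero[OF i] by (intro balancing_step_mgf_le) (auto simp: f_def a_def)
  finally show ?thesis
    using True by simp
next
  case False
  then show ?thesis
    using snoc_in_unclipped_take_Suc_iff[OF len i] by (auto simp: f_def a_def indicator_def)
qed

lemma sub_gaussian_last:
  assumes "i \<le> length ws"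
  shows "hilbert_sub_gaussian_on (balancing_walk (take i ws) 0) (unclipped (take i ws)) last
    (c i * sqrt (variance_factor L))"
  using assms
proof (induction i)
  case 0
  have "0 \<le> variance_factor L"
    using L_pos by (simp add: variance_factor_def)
  then show ?case
    by (simp add: hilbert_sub_gaussian_on_def unclipped_def)
next
  case (Suc i)
  have i: "i < length ws"
    using Suc.prems by simp
  define f where "f = fst (ws ! i)"
  let ?K = "variance_factor L"
  let ?M = "balancing_walk (take i ws) 0"
  show ?case
    unfolding hilbert_sub_gaussian_on_def
  proof (intro allI)
    fix u
    define u' where "u' = u - (inner u f / snd (ws ! i)) *\<^sub>R f"
    let ?U = "unclipped (take (Suc i) ws)"
    have "measure_pmf.expectation (balancing_walk (take (Suc i) ws) 0)
        (\<lambda>ps. exp (inner u (last ps)) * indicator ?U ps)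
      = measure_pmf.expectation ?M (\<lambda>ps. measure_pmf.expectation (balancing_step (ws ! i) (last ps))
          (\<lambda>p. exp (inner u p) * indicator ?U (ps @ [p])))"
      using i by (simp add: take_Suc_conv_app_nth balancing_walk_snoc expectation_bind_pmf_finite
          finite_set_pmf_balancing_walk finite_set_pmf_balancing_step)
    also have "\<dots> \<le> measure_pmf.expectation ?M
        (\<lambda>ps. exp (inner u' (last ps)) * indicator (unclipped (take i ws)) ps)
        * exp ((inner u f)\<^sup>2 / 2)"
      unfolding integral_mult_left_zero[symmetric] u'_def f_def
      using i by (intro expectation_mono_pmf_finite finite_set_pmf_balancing_walk expectation_step_le)
        (simp_all add: length_balancing_walk)
    also have "\<dots> \<le> exp ((c i * sqrt ?K)\<^sup>2 / 2 * (norm u')\<^sup>2) * exp ((inner u f)\<^sup>2 / 2)"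
      using Suc.IH i unfolding hilbert_sub_gaussian_on_def by (intro mult_right_mono) auto
    also have "\<dots> \<le> exp ((c (Suc i) * sqrt ?K)\<^sup>2 / 2 * (norm u)\<^sup>2)"
      using variance_recursion[OF i, of u] L_pos
      by (simp add: u'_def f_def mult_exp_exp power_mult_distrib variance_factor_def
          add_divide_distrib)
    finally show "measure_pmf.expectation (balancing_walk (take (Suc i) ws) 0)
        (\<lambda>ps. exp (inner u (last ps)) * indicator ?U ps)
      \<le> exp ((c (Suc i) * sqrt ?K)\<^sup>2 / 2 * (norm u)\<^sup>2)" .
  qed
qed

lemma sub_gaussian_nth:
  assumes "i \<le> length ws"
  shows "hilbert_sub_gaussian_on (balancing_walk ws 0) (unclipped (take i ws)) (\<lambda>ps. ps ! i)
    (c i * sqrt (variance_factor L))"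
proof (rule hilbert_sub_gaussian_on_pullback[where g = "take (Suc i)"])
  show "hilbert_sub_gaussian_on (map_pmf (take (Suc i)) (balancing_walk ws 0))
      (unclipped (take i ws)) last (c i * sqrt (variance_factor L))"
    unfolding balancing_walk_take using sub_gaussian_last[OF assms] .
next
  fix ps
  assume "ps \<in> set_pmf (balancing_walk ws 0)" "ps \<in> unclipped (take i ws)"
  moreover from this have "i < length ps"
    using assms by (simp add: length_balancing_walk)
  ultimately show "take (Suc i) ps \<in> unclipped (take i ws) \<and> ps ! i = last (take (Suc i) ps)"
    by (auto simp: unclipped_def take_Suc_conv_app_nth nth_append)
qed (rule finite_set_pmf_balancing_walk)

lemma prob_threshold_less_inner_le:
  assumes i: "i < length ws" and v: "norm v = norm (fst (ws ! i))" "v \<noteq> 0"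
  shows "measure_pmf.prob (balancing_walk ws 0)
    {ps \<in> unclipped (take i ws). snd (ws ! i) < inner (ps ! i) v} \<le> exp (- L)"
proof -
  define \<sigma> where "\<sigma> = c (Suc i) * sqrt (variance_factor L)"
  have K: "0 < variance_factor L"
    using L_pos by (simp add: variance_factor_def)
  have f: "0 < norm (fst (ws ! i))"
    using v(2) unfolding v(1)[symmetric] by simp
  then have c: "0 < c (Suc i)"
    using norm_le_c[OF i] by linarith
  have sg: "hilbert_sub_gaussian_on (balancing_walk ws 0) (unclipped (take i ws)) (\<lambda>ps. ps ! i) \<sigma>"
    unfolding \<sigma>_def
    by (rule hilbert_sub_gaussian_on_mono[OF sub_gaussian_nth])
      (use i c_nonneg c_mono K in \<open>auto simp: monoD intro!: mult_right_mono\<close>)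
  have "\<sigma>\<^sup>2 = (c (Suc i))\<^sup>2 * (1/2 + L)\<^sup>2 / (2 * L)"
    using K by (simp add: \<sigma>_def power_mult_distrib variance_factor_def)
  then have exponent: "(snd (ws ! i))\<^sup>2 / (2 * \<sigma>\<^sup>2 * (norm v)\<^sup>2) = L"
    unfolding threshold_eq[OF i] v using c f L_pos by (simp add: power_mult_distrib)
  have "\<sigma> \<noteq> 0" "0 \<le> snd (ws ! i)"
    using c K threshold_pos_or_zero[OF i] v by (auto simp: \<sigma>_def)
  from prob_inner_gt_le[OF sg finite_set_pmf_balancing_walk \<open>\<sigma> \<noteq> 0\<close> \<open>v \<noteq> 0\<close> this(2)]
  show ?thesis
    by (simp add: exponent)
qed

lemma prob_clipped_at_le:
  assumes i: "i < length ws"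
  shows "measure_pmf.prob (balancing_walk ws 0)
    {ps \<in> unclipped (take i ws). snd (ws ! i) < \<bar>inner (ps ! i) (fst (ws ! i))\<bar>} \<le> 2 * exp (- L)"
proof (cases "fst (ws ! i) = 0")
  case True
  then show ?thesis
    using threshold_eq[OF i] by simp
next
  case False
  let ?M = "balancing_walk ws 0"
  let ?A = "\<lambda>v. {ps \<in> unclipped (take i ws). snd (ws ! i) < inner (ps ! i) v}"
  have "measure_pmf.prob ?M
      {ps \<in> unclipped (take i ws). snd (ws ! i) < \<bar>inner (ps ! i) (fst (ws ! i))\<bar>}
    \<le> measure_pmf.prob ?M (?A (fst (ws ! i)) \<union> ?A (- fst (ws ! i)))"
    by (intro measure_pmf.finite_measure_mono) (auto simp: abs_if)
  also have "\<dots> \<le> measure_pmf.prob ?M (?A (fst (ws ! i))) + measure_pmf.prob ?M (?A (- fst (ws ! i)))"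
    by (rule measure_Un_le) auto
  also have "\<dots> \<le> 2 * exp (- L)"
    using prob_threshold_less_inner_le[OF i, of "fst (ws ! i)"]
      prob_threshold_less_inner_le[OF i, of "- fst (ws ! i)"] False
    by simp
  finally show ?thesis .
qed

lemma prob_unclipped_ge:
  "1 - 2 * real (length ws) * exp (- L) \<le> measure_pmf.prob (balancing_walk ws 0) (unclipped ws)"
proof -
  let ?M = "balancing_walk ws 0"
  have "measure_pmf.prob ?M (- unclipped (take i ws)) \<le> 2 * real i * exp (- L)"
    if "i \<le> length ws" for i
    using that
  proof (induction i)
    case 0
    then show ?case
      by (simp add: unclipped_def)
  next
    case (Suc i)
    then have i: "i < length ws"
      by simp
    have "measure_pmf.prob ?M (- unclipped (take (Suc i) ws)) \<le> measure_pmf.prob ?M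
        (- unclipped (take i ws) \<union>
         {ps \<in> unclipped (take i ws). snd (ws ! i) < \<bar>inner (ps ! i) (fst (ws ! i))\<bar>})"
      by (intro measure_pmf.finite_measure_mono) (auto simp: unclipped_take_Suc[OF i])
    also have "\<dots> \<le> measure_pmf.prob ?M (- unclipped (take i ws)) + measure_pmf.prob ?M
        {ps \<in> unclipped (take i ws). snd (ws ! i) < \<bar>inner (ps ! i) (fst (ws ! i))\<bar>}"
      by (rule measure_Un_le) auto
    also have "\<dots> \<le> 2 * real (Suc i) * exp (- L)"
      using Suc.IH i prob_clipped_at_le[OF i] by (simp add: algebra_simps)
    finally show ?case .
  qed
  from this[of "length ws"] show ?thesis
    using measure_pmf.prob_compl[of "unclipped ws" ?M] by (simp add: Compl_eq_Diff_UNIV)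
qed

lemma sub_gaussian_scaled_nth:
  assumes "4/3 \<le> L" and "i \<le> length ws"
  shows "hilbert_sub_gaussian_on (balancing_walk ws 0) (unclipped ws)
    (\<lambda>ps. (1 / (2 * real i)) *\<^sub>R ps ! i) (c i * sqrt L / (2 * real i))"
proof -
  have "hilbert_sub_gaussian_on (balancing_walk ws 0) (unclipped ws) (\<lambda>ps. ps ! i)
      (c i * sqrt (variance_factor L))"
    by (rule hilbert_sub_gaussian_on_subset[OF sub_gaussian_nth[OF assms(2)]
          finite_set_pmf_balancing_walk])
      (use unclipped_take_mono[OF assms(2), of ws] in simp)
  then have "hilbert_sub_gaussian_on (balancing_walk ws 0) (unclipped ws)
      (\<lambda>ps. (1 / (2 * real i)) *\<^sub>R ps ! i) (1 / (2 * real i) * (c i * sqrt (variance_factor L)))"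
    by (rule hilbert_sub_gaussian_on_scaleR)
  moreover have "\<bar>1 / (2 * real i) * (c i * sqrt (variance_factor L))\<bar> \<le> c i * sqrt L / (2 * real i)"
    using variance_factor_le[OF assms(1)] assms(1) c_nonneg[of i] L_pos
    by (simp add: abs_mult variance_factor_def divide_right_mono mult_left_mono)
  ultimately show ?thesis
    by (rule hilbert_sub_gaussian_on_mono)
qed

end

section \<open>Kernel halving as a self-balancing walk\<close>

lemma fm_kernel_dist_eq_norm:
  "sqrt (fm_kernel Phi x x + fm_kernel Phi y y - 2 * fm_kernel Phi x y) = norm (Phi x - Phi y)"
  by (simp add: fm_kernel_def norm_eq_sqrt_inner inner_diff_left inner_diff_right inner_commute)

lemma kh_b_eq_norm: "kh_b Phi xs j = norm (Phi (xs ! (2 * j - 2)) - Phi (xs ! (2 * j - 1)))"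
  by (simp add: kh_b_def fm_kernel_dist_eq_norm)

definition kh_weights :: "real \<Rightarrow> ('x \<Rightarrow> 'h::real_inner) \<Rightarrow> 'x list \<Rightarrow> ('h \<times> real) list" where
  "kh_weights delta Phi xs = map (\<lambda>j. (Phi (xs ! (2 * j)) - Phi (xs ! (2 * j + 1)),
      kh_b Phi xs (Suc j) * kh_bmax Phi xs (Suc j) * (1/2 + ln (2 * real (length xs) / delta))))
    [0..<length xs div 2]"

lemma length_kh_weights: "length (kh_weights delta Phi xs) = length xs div 2"
  by (simp add: kh_weights_def)

lemma map_kh_psi_kh_iter_drop:
  assumes "k \<le> length xs div 2"
  shows "map_pmf (map kh_psi)
      (kh_iter delta (length xs) Phi (drop k (kh_pairs xs)) (S1, S2, psi, kh_bmax Phi xs k))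
    = balancing_walk (drop k (kh_weights delta Phi xs)) psi"
  using assms
proof (induction k arbitrary: S1 S2 psi rule: inc_induct)
  case base
  then show ?case
    by (simp add: kh_pairs_def kh_weights_def kh_psi_def)
next
  case (step k)
  have pairs: "drop k (kh_pairs xs) = (xs ! (2 * k), xs ! (2 * k + 1)) # drop (Suc k) (kh_pairs xs)"
    using step.hyps by (simp add: kh_pairs_def Cons_nth_drop_Suc[symmetric])
  have weights: "drop k (kh_weights delta Phi xs) =
      (Phi (xs ! (2 * k)) - Phi (xs ! (2 * k + 1)),
       kh_b Phi xs (Suc k) * kh_bmax Phi xs (Suc k) * (1/2 + ln (2 * real (length xs) / delta)))
      # drop (Suc k) (kh_weights delta Phi xs)"
    using step.hyps by (simp add: kh_weights_def Cons_nth_drop_Suc[symmetric])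
  define x x' where "x = xs ! (2 * k)" and "x' = xs ! (2 * k + 1)"
  define st' where "st' eta = (if eta
      then (S1 @ [x'], S2 @ [x], psi + (Phi x - Phi x'), kh_bmax Phi xs (Suc k))
      else (S1 @ [x], S2 @ [x'], psi - (Phi x - Phi x'), kh_bmax Phi xs (Suc k)))" for eta
  define p where "p = min 1 ((1/2) * max 0 (1 - inner psi (Phi x - Phi x') /
      (kh_b Phi xs (Suc k) * kh_bmax Phi xs (Suc k) * (1/2 + ln (2 * real (length xs) / delta)))))"
  have b: "sqrt (fm_kernel Phi x x + fm_kernel Phi x' x' - 2 * fm_kernel Phi x x') = kh_b Phi xs (Suc k)"
    by (simp add: kh_b_def Let_def x_def x'_def)
  have kh_step: "kh_step delta (length xs) Phi (x, x') (S1, S2, psi, kh_bmax Phi xs k)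
      = map_pmf st' (bernoulli_pmf p)"
    by (simp add: kh_step_def st'_def[abs_def] p_def Let_def b cong: if_cong)
  have IH: "map_pmf (map kh_psi) (kh_iter delta (length xs) Phi (drop (Suc k) (kh_pairs xs)) (st' eta))
      = balancing_walk (drop (Suc k) (kh_weights delta Phi xs))
          (if eta then psi + (Phi x - Phi x') else psi - (Phi x - Phi x'))" for eta
    by (cases eta) (simp_all only: st'_def step.IH if_True if_False)
  have "map_pmf (map kh_psi) (kh_iter delta (length xs) Phi (drop k (kh_pairs xs))
        (S1, S2, psi, kh_bmax Phi xs k))
      = bind_pmf (bernoulli_pmf p) (\<lambda>eta. map_pmf ((#) psi) (map_pmf (map kh_psi)
          (kh_iter delta (length xs) Phi (drop (Suc k) (kh_pairs xs)) (st' eta))))"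
    unfolding pairs x_def[symmetric] x'_def[symmetric]
    by (simp add: kh_step map_bind_pmf bind_map_pmf map_pmf_comp kh_psi_def[of "(S1, S2, psi, _)"])
  also have "\<dots> = balancing_walk (drop k (kh_weights delta Phi xs)) psi"
    unfolding IH weights x_def[symmetric] x'_def[symmetric]
    unfolding balancing_walk.simps balancing_step_def fst_conv snd_conv p_def[symmetric]
    by (simp add: bind_map_pmf)
  finally show ?case .
qed

lemma map_kh_psi_KH:
  "map_pmf (map kh_psi) (KH delta Phi xs) = balancing_walk (kh_weights delta Phi xs) 0"
  using map_kh_psi_kh_iter_drop[of 0 xs delta Phi "[]" "[]" 0] by (simp add: KH_def)

lemma finite_set_pmf_kh_iter: "finite (set_pmf (kh_iter delta n Phi prs st))"
proof (induction prs arbitrary: st)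
  case (Cons pr prs)
  have "finite (set_pmf (kh_step delta n Phi pr st))"
    by (simp add: kh_step_def Let_def UNIV_bool split: prod.splits)
  then show ?case
    using Cons by simp
qed simp

lemma ln_ge_four_thirds:
  assumes "0 < delta" "delta < 1" "2 \<le> n"
  shows "4/3 \<le> ln (2 * real n / delta)"
proof -
  have "4 \<le> 2 * real n"
    using assms by simp
  also have "\<dots> \<le> 2 * real n / delta"
    using assms by (simp add: le_divide_eq)
  finally have "ln 4 \<le> ln (2 * real n / delta)"
    by simp
  moreover have "4/3 \<le> ln (4::real)"
    using ln2_ge_two_thirds ln_mult[of 2 2] by simp
  ultimately show ?thesis
    by linarith
qed

lemma balancing_schedule_kh_weights:
  assumes "0 < delta" "delta < 1" "2 \<le> length xs"
  shows "balancing_schedule (kh_weights delta Phi xs) (kh_bmax Phi xs) (ln (2 * real (length xs) / delta))"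
proof
  show "0 < ln (2 * real (length xs) / delta)"
    using ln_ge_four_thirds[OF assms] by simp
  show "mono (kh_bmax Phi xs)"
    by (rule incseq_SucI) simp
next
  fix j
  assume "j < length (kh_weights delta Phi xs)"
  then have "kh_weights delta Phi xs ! j = (Phi (xs ! (2 * j)) - Phi (xs ! (2 * j + 1)),
      kh_b Phi xs (Suc j) * kh_bmax Phi xs (Suc j) * (1/2 + ln (2 * real (length xs) / delta)))"
    and "norm (Phi (xs ! (2 * j)) - Phi (xs ! (2 * j + 1))) = kh_b Phi xs (Suc j)"
    by (simp_all add: kh_weights_def kh_b_eq_norm)
  then show "norm (fst (kh_weights delta Phi xs ! j)) \<le> kh_bmax Phi xs (Suc j)"
    and "snd (kh_weights delta Phi xs ! j) = norm (fst (kh_weights delta Phi xs ! j))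
      * kh_bmax Phi xs (Suc j) * (1/2 + ln (2 * real (length xs) / delta))"
    by simp_all
qed simp

lemma prob_KH_unclipped_ge:
  assumes delta: "0 < delta" "delta < 1" and n: "2 \<le> length xs"
  shows "1 - delta / 2
    \<le> measure_pmf.prob (KH delta Phi xs) (map kh_psi -` unclipped (kh_weights delta Phi xs))"
proof -
  interpret balancing_schedule "kh_weights delta Phi xs" "kh_bmax Phi xs"
      "ln (2 * real (length xs) / delta)"
    by (rule balancing_schedule_kh_weights[OF delta n])
  have "0 < 2 * real (length xs) / delta"
    using delta n by (intro divide_pos_pos) auto
  then have exp_L: "exp (- ln (2 * real (length xs) / delta)) = delta / (2 * real (length xs))"
    by (simp add: exp_minus)
  have "2 * real (length (kh_weights delta Phi xs)) \<le> real (length xs)"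
    unfolding length_kh_weights by linarith
  then have "2 * real (length (kh_weights delta Phi xs)) * exp (- ln (2 * real (length xs) / delta))
      \<le> real (length xs) * (delta / (2 * real (length xs)))"
    unfolding exp_L using delta by (intro mult_right_mono) auto
  also have "\<dots> = delta / 2"
    using n by auto
  finally show ?thesis
    using prob_unclipped_ge by (simp flip: map_kh_psi_KH)
qed

lemma sub_gaussian_on_KH:
  assumes delta: "0 < delta" "delta < 1" and n: "2 \<le> length xs"
    and i: "i \<in> {1..length xs div 2}"
  shows "sub_gaussian_on Phi (KH delta Phi xs) (map kh_psi -` unclipped (kh_weights delta Phi xs))
    (\<lambda>tr. (1 / (2 * real i)) *\<^sub>R kh_psi (tr ! i))
    (kh_bmax Phi xs i * sqrt (ln (2 * real (length xs) / delta)) / (2 * real i))"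
proof (rule sub_gaussian_on_if_hilbert_sub_gaussian_on,
    rule hilbert_sub_gaussian_on_pullback[where g = "map kh_psi"])
  interpret balancing_schedule "kh_weights delta Phi xs" "kh_bmax Phi xs"
      "ln (2 * real (length xs) / delta)"
    by (rule balancing_schedule_kh_weights[OF delta n])
  show "hilbert_sub_gaussian_on (map_pmf (map kh_psi) (KH delta Phi xs))
      (unclipped (kh_weights delta Phi xs))
      (\<lambda>ps. (1 / (2 * real i)) *\<^sub>R ps ! i)
      (kh_bmax Phi xs i * sqrt (ln (2 * real (length xs) / delta)) / (2 * real i))"
    unfolding map_kh_psi_KH using sub_gaussian_scaled_nth ln_ge_four_thirds[OF delta n] i
    by (simp add: length_kh_weights)
  show "finite (set_pmf (KH delta Phi xs))"
    by (simp add: KH_def finite_set_pmf_kh_iter)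
next
  fix tr
  assume "tr \<in> set_pmf (KH delta Phi xs)" "tr \<in> map kh_psi -` unclipped (kh_weights delta Phi xs)"
  moreover from this have "map kh_psi tr \<in> set_pmf (balancing_walk (kh_weights delta Phi xs) 0)"
    by (simp flip: map_kh_psi_KH)
  then have "i < length tr"
    using length_balancing_walk i by (fastforce simp: length_kh_weights)
  ultimately show "map kh_psi tr \<in> unclipped (kh_weights delta Phi xs) \<and>
      (1 / (2 * real i)) *\<^sub>R kh_psi (tr ! i) = (1 / (2 * real i)) *\<^sub>R map kh_psi tr ! i"
    by simp
qed

section \<open>Maximum mean discrepancy of point masses\<close>

lemma mmd_eq_norm:
  fixes Phi :: "'x \<Rightarrow> 'h::real_inner"
  assumes v: "v \<in> span (range Phi)"
    and represent: "\<And>f. measure_pmf.expectation p (\<lambda>x. inner f (Phi x)) -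
                         measure_pmf.expectation q (\<lambda>x. inner f (Phi x)) = inner f v"
  shows "mmd Phi p q = norm v"
  unfolding mmd_def represent
proof (rule cSup_eq_maximum)
  have "span (range Phi) \<subseteq> rkhs Phi"
    unfolding rkhs_def by (rule closure_subset)
  moreover have "(1 / norm v) *\<^sub>R v \<in> span (range Phi)" "0 \<in> span (range Phi)"
    using v by (simp_all add: span_scale span_zero)
  moreover have "\<bar>inner ((1 / norm v) *\<^sub>R v) v\<bar> = norm v"
    by (cases "v = 0") (simp_all add: power2_norm_eq_inner[symmetric] power2_eq_square)
  ultimately show "norm v \<in> (\<lambda>f. \<bar>inner f v\<bar>) ` {f \<in> rkhs Phi. norm f \<le> 1}"
    by (intro image_eqI[where x = "(1 / norm v) *\<^sub>R v"]) auto
next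
  fix z
  assume "z \<in> (\<lambda>f. \<bar>inner f v\<bar>) ` {f \<in> rkhs Phi. norm f \<le> 1}"
  then obtain f where "norm f \<le> 1" "z = \<bar>inner f v\<bar>"
    by auto
  then show "z \<le> norm v"
    using Cauchy_Schwarz_ineq2[of f v] mult_right_mono[of "norm f" 1 "norm v"] by simp
qed

lemma mmd_return_pmf: "mmd Phi (return_pmf x) (return_pmf y) = norm (Phi x - Phi y)"
  by (rule mmd_eq_norm) (auto simp: inner_diff_right span_diff span_base)

lemma mmd_return_pmf_of_multiset:
  fixes Phi :: "'x \<Rightarrow> 'h::real_inner"
  assumes "xs \<noteq> []"
  shows "mmd Phi (return_pmf x) (pmf_of_multiset (mset xs))
    = norm (Phi x - (\<Sum>y\<in>set xs. pmf (pmf_of_multiset (mset xs)) y *\<^sub>R Phi y))"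
proof (rule mmd_eq_norm)
  show "Phi x - (\<Sum>y\<in>set xs. pmf (pmf_of_multiset (mset xs)) y *\<^sub>R Phi y) \<in> span (range Phi)"
    by (intro span_diff span_sum span_scale span_base) auto
next
  fix f
  have "measure_pmf.expectation (pmf_of_multiset (mset xs)) (\<lambda>y. inner f (Phi y))
      = (\<Sum>y\<in>set xs. inner f (Phi y) * pmf (pmf_of_multiset (mset xs)) y)"
    using assms by (intro integral_measure_pmf_real) auto
  then show "measure_pmf.expectation (return_pmf x) (\<lambda>y. inner f (Phi y))
      - measure_pmf.expectation (pmf_of_multiset (mset xs)) (\<lambda>y. inner f (Phi y))
      = inner f (Phi x - (\<Sum>y\<in>set xs. pmf (pmf_of_multiset (mset xs)) y *\<^sub>R Phi y))"
    by (simp add: inner_diff_right inner_sum_right mult.commute)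
qed

lemma kh_bmax_eq_Max: "1 \<le> i \<Longrightarrow> kh_bmax Phi xs i = Max (kh_b Phi xs ` {1..i})"
proof (induction i rule: dec_induct)
  case base
  then show ?case
    by (simp add: kh_b_eq_norm)
next
  case (step i)
  have "{1..Suc i} = insert (Suc i) {1..i}"
    by auto
  then show ?case
    using step by simp
qed

lemma Max_mmd_pairs_eq_kh_bmax:
  "1 \<le> i \<Longrightarrow> Max ((\<lambda>j. mmd Phi (return_pmf (xs ! (2 * j - 2))) (return_pmf (xs ! (2 * j - 1))))
    ` {1..i}) = kh_bmax Phi xs i"
  by (simp add: kh_bmax_eq_Max mmd_return_pmf kh_b_eq_norm)

lemma kh_b_le_Max_dist:
  assumes "1 \<le> j" "2 * j \<le> length xs"
  shows "kh_b Phi xs j \<le> 2 * Max ((\<lambda>x. norm (Phi x - \<mu>)) ` set xs)"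
proof -
  let ?x = "xs ! (2 * j - 2)" and ?x' = "xs ! (2 * j - 1)"
  have "?x \<in> set xs" "?x' \<in> set xs"
    using assms by auto
  then have "norm (Phi ?x - \<mu>) \<le> Max ((\<lambda>x. norm (Phi x - \<mu>)) ` set xs)"
    and "norm (Phi ?x' - \<mu>) \<le> Max ((\<lambda>x. norm (Phi x - \<mu>)) ` set xs)"
    by simp_all
  moreover have "kh_b Phi xs j \<le> norm (Phi ?x - \<mu>) + norm (Phi ?x' - \<mu>)"
    using norm_triangle_ineq4[of "Phi ?x - \<mu>" "Phi ?x' - \<mu>"] by (simp add: kh_b_eq_norm)
  ultimately show ?thesis
    by linarith
qed

lemma kh_bmax_le_min:
  fixes Phi :: "'x \<Rightarrow> 'h::real_inner"
  assumes "1 \<le> i" "i \<le> length xs div 2"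
  shows "kh_bmax Phi xs i \<le> 2 * min (Max ((\<lambda>x. norm (Phi x)) ` set xs))
    (Max ((\<lambda>x. mmd Phi (return_pmf x) (pmf_of_multiset (mset xs))) ` set xs))"
proof -
  have "xs \<noteq> []"
    using assms by auto
  have "kh_b Phi xs j \<le> 2 * Max ((\<lambda>x. norm (Phi x)) ` set xs)"
    and "kh_b Phi xs j \<le> 2 * Max ((\<lambda>x. mmd Phi (return_pmf x) (pmf_of_multiset (mset xs))) ` set xs)"
    if "j \<in> {1..i}" for j
  proof -
    have "2 * (length xs div 2) \<le> length xs"
      by simp
    then have j: "1 \<le> j" "2 * j \<le> length xs"
      using that assms by auto
    show "kh_b Phi xs j \<le> 2 * Max ((\<lambda>x. norm (Phi x)) ` set xs)"
      using kh_b_le_Max_dist[OF j, of Phi 0] by simp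
    show "kh_b Phi xs j \<le> 2 * Max ((\<lambda>x. mmd Phi (return_pmf x) (pmf_of_multiset (mset xs))) ` set xs)"
      using kh_b_le_Max_dist[OF j, of Phi
          "\<Sum>y\<in>set xs. pmf (pmf_of_multiset (mset xs)) y *\<^sub>R Phi y"]
      by (simp add: mmd_return_pmf_of_multiset[OF \<open>xs \<noteq> []\<close>])
  qed
  then show ?thesis
    using assms by (auto simp: kh_bmax_eq_Max min_def intro!: Max.boundedI)
qed

theorem propositionB2:
  fixes k :: "'x \<Rightarrow> 'x \<Rightarrow> real"
    and Phi :: "'x \<Rightarrow> 'h::{real_inner, complete_space}"
    and xs :: "'x list" and delta :: real
  assumes kernel: "\<And>x y. k x y = inner (Phi x) (Phi y)"
    and delta: "0 < delta" "delta < 1"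
    and n: "even (length xs)" "length xs \<ge> 2"
  shows "(\<exists>E. measure_pmf.prob (KH delta Phi xs) E \<ge> 1 - delta / 2 \<and>
          (\<forall>i \<in> {1..length xs div 2}.
             sub_gaussian_on Phi (KH delta Phi xs) E
               (\<lambda>tr. (1 / (2 * real i)) *\<^sub>R kh_psi (tr ! i))
               (kh_bmax Phi xs i * sqrt (ln (2 * real (length xs) / delta)) / (2 * real i))))
        \<and> (\<forall>i \<in> {1..length xs div 2}.
          kh_bmax Phi xs i * sqrt (ln (2 * real (length xs) / delta)) / (2 * real i)
            = sqrt (ln (2 * real (length xs) / delta)) / (2 * real i)
              * Max ((\<lambda>j. mmd Phi (return_pmf (xs ! (2 * j - 2))) (return_pmf (xs ! (2 * j - 1))))
                     ` {1..i})
          \<and> sqrt (ln (2 * real (length xs) / delta)) / (2 * real i)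
              * Max ((\<lambda>j. mmd Phi (return_pmf (xs ! (2 * j - 2))) (return_pmf (xs ! (2 * j - 1))))
                     ` {1..i})
            \<le> sqrt (ln (2 * real (length xs) / delta)) / (2 * real i) * 2
              * min (Max ((\<lambda>x. sqrt (k x x)) ` set xs))
                    (Max ((\<lambda>x. mmd Phi (return_pmf x) (pmf_of_multiset (mset xs))) ` set xs)))"
proof -
  have diag: "(\<lambda>x. sqrt (k x x)) = (\<lambda>x. norm (Phi x))"
    by (simp add: fun_eq_iff kernel norm_eq_sqrt_inner)
  have bound: "sqrt (ln (2 * real (length xs) / delta)) / (2 * real i) * kh_bmax Phi xs i
      \<le> sqrt (ln (2 * real (length xs) / delta)) / (2 * real i) * 2
        * min (Max ((\<lambda>x. norm (Phi x)) ` set xs))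
            (Max ((\<lambda>x. mmd Phi (return_pmf x) (pmf_of_multiset (mset xs))) ` set xs))"
    if "1 \<le> i" "i \<le> length xs div 2" for i
    unfolding mult.assoc using that ln_ge_four_thirds[OF delta n(2)]
    by (intro mult_left_mono kh_bmax_le_min) auto
  show ?thesis
    unfolding diag
    using prob_KH_unclipped_ge[OF delta n(2)] sub_gaussian_on_KH[OF delta n(2)] bound
    by (intro conjI ballI exI[of _ "map kh_psi -` unclipped (kh_weights delta Phi xs)"],
        simp_all only: atLeastAtMost_iff Max_mmd_pairs_eq_kh_bmax)
      (auto simp: mult.commute)
qed

end
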